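(* Let $\langle \Lambda, \mathcal{S}\rangle$ be a measurable space and let $P_{00}, P_{0+}, P_{+0}, P_{++}$ be four probability measures on it that satisfy the Preparation Uninformativeness Condition, i.e. there is a measure $Q$ on $\langle \Lambda,\mathcal{S}\rangle$ dominating all four, with densities $\mu_{xy} = dP_{xy}/dQ$ ($x,y\in\{0,+\}$) such that for all $\lambda \in \Lambda$, $$\mu_{00}(\lambda)\,\mu_{++}(\lambda) = \mu_{0+}(\lambda)\,\mu_{+0}(\lambda).$$ Suppose there is an experiment $E$ with finite outcome set $K$, given by measurable functions $p_k:\Lambda\to[0,1]$ ($k\in K$) with $\sum_{k\in K} p_k(\lambda)=1$ for all $\lambda$, such that every outcome $k\in K$ is precluded by some $P_{xy}$, i.e. for each $k$ there are $x,y\in\{0,+\}$ with $\int_\Lambda p_k\, dP_{xy} = 0$. Then $P_{00}$ and $P_{++}$ have null overlap, and $P_{0+}$ and $P_{+0}$ have null overlap; that is, $\int_\Lambda \min(\mu_{00},\mu_{++})\,dQ = 0$ and $\int_\Lambda \min(\mu_{0+},\mu_{+0})\,dQ = 0$ (equivalently, the total variation distances $\delta(P_{00},P_{++})$ and $\delta(P_{0+},P_{+0})$ equal $1$).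
   Context: The total variation (statistical) distance between probability measures $P,Q'$ with densities $p,q$ with respect to a common dominating measure $\nu$ is $\delta(P,Q')=\sup_{A\in\mathcal{S}}|P(A)-Q'(A)| = 1-\int_\Lambda \min(p,q)\,d\nu$; the classical overlap is $\omega(P,Q')=1-\delta(P,Q')$, and "null overlap" means $\omega=0$. *)

theory Defs
  imports "HOL-Probability.Probability"
begin

end

theory Submission
  imports Defs
begin

text \<open>An outcome precluded by \<open>P\<^sub>x\<^sub>y\<close> has probability zero wherever \<open>\<mu>\<^sub>x\<^sub>y > 0\<close>. Since the
  outcome probabilities sum to one, almost every \<open>\<lambda>\<close> has some \<open>\<mu>\<^sub>x\<^sub>y(\<lambda>) = 0\<close>. By the
  Preparation Uninformativeness Condition \<open>\<mu>\<^sub>0\<^sub>0\<mu>\<^sub>+\<^sub>+ = \<mu>\<^sub>0\<^sub>+\<mu>\<^sub>+\<^sub>0\<close>, one pair is jointly positive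
  exactly when the other is, so at such \<open>\<lambda>\<close> both minima vanish.\<close>

lemma AE_zero_where_density_pos:
  fixes g f :: "'a \<Rightarrow> real"
  assumes prob: "prob_space (density Q (\<lambda>l. ennreal (g l)))"
    and g_meas: "g \<in> borel_measurable Q"
    and f_meas: "f \<in> borel_measurable Q"
    and f_range: "\<And>l. l \<in> space Q \<Longrightarrow> 0 \<le> f l \<and> f l \<le> 1"
    and f_int_zero: "(\<integral>l. f l \<partial>density Q (\<lambda>l. ennreal (g l))) = 0"
  shows "AE l in Q. 0 < g l \<longrightarrow> f l = 0"
proof -
  let ?P = "density Q (\<lambda>l. ennreal (g l))"
  interpret P: prob_space ?P by (rule prob)
  have "integrable ?P f"
    by (rule P.integrable_const_bound[where B=1]) (use f_meas f_range in auto)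
  moreover have "AE l in ?P. 0 \<le> f l"
    using f_range by auto
  ultimately have "AE l in ?P. f l = 0"
    using integral_nonneg_eq_0_iff_AE f_int_zero by blast
  then show ?thesis
    using g_meas by (simp add: AE_density)
qed

lemma AE_some_density_not_pos:
  fixes g :: "'i \<Rightarrow> 'a \<Rightarrow> real" and p :: "'k \<Rightarrow> 'a \<Rightarrow> real"
  assumes "finite K"
    and p_sum: "\<And>l. l \<in> space Q \<Longrightarrow> (\<Sum>k\<in>K. p k l) = 1"
    and precluded: "\<And>k. k \<in> K \<Longrightarrow> \<exists>i. AE l in Q. 0 < g i l \<longrightarrow> p k l = 0"
  shows "AE l in Q. \<exists>i. \<not> 0 < g i l"
proof -
  have "AE l in Q. \<exists>i. 0 < g i l \<longrightarrow> p k l = 0" if "k \<in> K" for k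
  proof -
    obtain i where "AE l in Q. 0 < g i l \<longrightarrow> p k l = 0"
      using precluded[OF \<open>k \<in> K\<close>] by blast
    then show ?thesis
      by (rule AE_mp) (auto intro: AE_I2)
  qed
  then have "AE l in Q. \<forall>k\<in>K. \<exists>i. 0 < g i l \<longrightarrow> p k l = 0"
    by (rule AE_finite_allI[OF \<open>finite K\<close>])
  then show ?thesis
  proof (rule AE_mp, intro AE_I2 impI)
    fix l assume l: "l \<in> space Q" and vanish: "\<forall>k\<in>K. \<exists>i. 0 < g i l \<longrightarrow> p k l = 0"
    show "\<exists>i. \<not> 0 < g i l"
    proof (rule ccontr)
      assume "\<nexists>i. \<not> 0 < g i l"
      with vanish have "(\<Sum>k\<in>K. p k l) = 0"
        by (intro sum.neutral) blast
      with p_sum[OF l] show False by simp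
    qed
  qed
qed

lemma min_eq_zero_of_mult_eq:
  fixes a b c d :: real
  assumes nonneg: "0 \<le> a" "0 \<le> b" "0 \<le> c" "0 \<le> d"
    and cross: "a * d = b * c"
    and not_all_pos: "\<not> (0 < a \<and> 0 < b \<and> 0 < c \<and> 0 < d)"
  shows "min a d = 0 \<and> min b c = 0"
proof -
  have "(0 < a \<and> 0 < d) \<longleftrightarrow> 0 < a * d" and "(0 < b \<and> 0 < c) \<longleftrightarrow> 0 < b * c"
    using nonneg by (auto simp: zero_less_mult_iff)
  with cross not_all_pos have "\<not> (0 < a \<and> 0 < d)" and "\<not> (0 < b \<and> 0 < c)"
    by auto
  with nonneg show ?thesis
    by (auto simp: min_def)
qed

theorem theorem1:
  fixes M :: "'a measure"
    and P :: "bool \<Rightarrow> bool \<Rightarrow> 'a measure"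
    and Q :: "'a measure"
    and \<mu> :: "bool \<Rightarrow> bool \<Rightarrow> 'a \<Rightarrow> real"
    and K :: "'k set"
    and p :: "'k \<Rightarrow> 'a \<Rightarrow> real"
  assumes P_prob: "\<And>x y. prob_space (P x y)"
    and P_sets: "\<And>x y. sets (P x y) = sets M"
    and Q_sets: "sets Q = sets M"
    and \<mu>_meas: "\<And>x y. \<mu> x y \<in> borel_measurable M"
    and \<mu>_nonneg: "\<And>x y l. l \<in> space M \<Longrightarrow> 0 \<le> \<mu> x y l"
    and P_density: "\<And>x y. P x y = density Q (\<lambda>l. ennreal (\<mu> x y l))"
    and PUC: "\<And>l. l \<in> space M \<Longrightarrow>
               \<mu> False False l * \<mu> True True l = \<mu> False True l * \<mu> True False l"
    and K_fin: "finite K"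
    and p_meas: "\<And>k. k \<in> K \<Longrightarrow> p k \<in> borel_measurable M"
    and p_range: "\<And>k l. k \<in> K \<Longrightarrow> l \<in> space M \<Longrightarrow> 0 \<le> p k l \<and> p k l \<le> 1"
    and p_sum: "\<And>l. l \<in> space M \<Longrightarrow> (\<Sum>k\<in>K. p k l) = 1"
    and precluded: "\<And>k. k \<in> K \<Longrightarrow> \<exists>x y. (\<integral>l. p k l \<partial>(P x y)) = 0"
  shows "(\<integral>\<^sup>+ l. ennreal (min (\<mu> False False l) (\<mu> True True l)) \<partial>Q) = 0
         \<and> (\<integral>\<^sup>+ l. ennreal (min (\<mu> False True l) (\<mu> True False l)) \<partial>Q) = 0"
proof -
  have space_Q: "space Q = space M"
    using Q_sets by (rule sets_eq_imp_space_eq)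
  have "\<exists>xy. AE l in Q. 0 < case_prod \<mu> xy l \<longrightarrow> p k l = 0" if "k \<in> K" for k
  proof -
    obtain x y where "(\<integral>l. p k l \<partial>P x y) = 0"
      using precluded[OF \<open>k \<in> K\<close>] by blast
    then have "AE l in Q. 0 < \<mu> x y l \<longrightarrow> p k l = 0"
      using P_prob[of x y] \<mu>_meas p_meas[OF \<open>k \<in> K\<close>] p_range[OF \<open>k \<in> K\<close>]
      by (intro AE_zero_where_density_pos)
         (auto simp: P_density measurable_cong_sets[OF Q_sets refl] space_Q)
    then show ?thesis by auto
  qed
  then have "AE l in Q. \<exists>xy. \<not> 0 < case_prod \<mu> xy l"
    using K_fin p_sum by (intro AE_some_density_not_pos) (auto simp: space_Q)
  then have "AE l in Q. min (\<mu> False False l) (\<mu> True True l) = 0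
                      \<and> min (\<mu> False True l) (\<mu> True False l) = 0"
  proof (rule AE_mp, intro AE_I2 impI)
    fix l assume "l \<in> space Q" and "\<exists>xy. \<not> 0 < case_prod \<mu> xy l"
    then have l: "l \<in> space M" and "\<not> (\<forall>x y. 0 < \<mu> x y l)"
      by (auto simp: space_Q)
    then have "\<not> (0 < \<mu> False False l \<and> 0 < \<mu> False True l \<and> 0 < \<mu> True False l
                 \<and> 0 < \<mu> True True l)"
      by (metis (full_types))
    then show "min (\<mu> False False l) (\<mu> True True l) = 0
             \<and> min (\<mu> False True l) (\<mu> True False l) = 0"
      by (intro min_eq_zero_of_mult_eq \<mu>_nonneg[OF l] PUC[OF l])
  qed
  then have "AE l in Q. ennreal (min (\<mu> False False l) (\<mu> True True l)) = 0"
    and "AE l in Q. ennreal (min (\<mu> False True l) (\<mu> True False l)) = 0"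
    by (auto elim: AE_mp)
  then show ?thesis
    by (simp add: nn_integral_cong_AE[where v="\<lambda>_. 0", simplified])
qed

end
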